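(* Let $(Z,Z_{ac},e)$ be an accretive archimedean matrix-order unit space and let $((V,V_{ac}),\psi)$ be a $*$-closure of $(Z,Z_{ac})$. Then $f=\psi(e)$ is an accretive archimedean matrix-order unit for $(V,V_{ac})$.
   Context: For a complex vector space $Z$, $M_n(Z)$ is the $n\times n$ matrices over $Z$; $e\otimes I_n$ is the diagonal matrix with all diagonal entries $e$. A cone is a set $C$ with $C+C\subseteq C$, $tC\subseteq C$ ($t\ge0$); a matrix cone is a sequence of cones $C_n\subseteq M_n(Z)$ with $X^*C_nX\subseteq C_k$ for all scalar $X\in M_{n,k}$; it is $\mathbb{C}$-proper if $C_1\cap-C_1\cap iC_1\cap-iC_1=\{0\}$, and then $(Z,Z_{ac})$ is an accretive matrix-ordered vector space, with $Z_{sa}^n=iZ_{ac}^n\cap-iZ_{ac}^n$. An element $e\in Z_{sa}^1$ is an accretive matrix-order unit if for each $n$ and $z\in M_n(Z)$ there is $t>0$ with $te\otimes I_n+z\in Z_{ac}^n$; it is archimedean if $te\otimes I_n+z\in Z_{ac}^n$ for all $t>0$ implies $z\in Z_{ac}^n$; $(Z,Z_{ac},e)$ is then an accretive archimedean matrix-order unit space. $(V,V_{ac})$ is self-adjoint if $V=\operatorname{span}_{\mathbb{C}}V_{sa}^1$; then $M_n(V)$ carries a unique conjugate-linear involution fixing $V_{sa}^n$, given by $[v_{kl}]^*=[v_{lk}^*]$. A linear map is real-completely positive if its entrywise amplifications preserve the accretive cones; a real-complete order embedding if it is injective and it and its inverse on the range are real-completely positive. A $*$-closure of $(Z,Z_{ac})$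 is a pair $((V,V_{ac}),\psi)$ with $(V,V_{ac})$ a self-adjoint accretive matrix-ordered vector space, $\psi:Z\to V$ a real-complete order embedding, and $V=\psi(Z)+\psi(Z)^*$. *)

theory Defs
  imports Complex_Main "HOL-Library.Function_Algebras"
begin

text \<open>A complex vector space is represented by a carrier type 'a::ab_group_add with a
  scalar multiplication s :: complex \<Rightarrow> 'a \<Rightarrow> 'a satisfying the vector_space axioms.
  An n x n matrix over 'a is a function nat \<Rightarrow> nat \<Rightarrow> 'a vanishing outside
  {0..<n} x {0..<n}; M_n(Z) is represented by the set of such functions.
  A matrix cone is a family C :: nat \<Rightarrow> matrix set, indexed by n \<ge> 1.\<close>

type_synonym 'a mat = "nat \<Rightarrow> nat \<Rightarrow> 'a"

definition is_mat :: "nat \<Rightarrow> 'a::zero mat \<Rightarrow> bool" where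
  "is_mat n A \<longleftrightarrow> (\<forall>i j. (n \<le> i \<or> n \<le> j) \<longrightarrow> A i j = 0)"

definition mscale :: "(complex \<Rightarrow> 'a \<Rightarrow> 'a) \<Rightarrow> complex \<Rightarrow> 'a mat \<Rightarrow> 'a mat" where
  "mscale s c A = (\<lambda>i j. s c (A i j))"

definition mmap :: "('a \<Rightarrow> 'b) \<Rightarrow> 'a mat \<Rightarrow> 'b mat" where
  "mmap f A = (\<lambda>i j. f (A i j))"

definition emb1 :: "'a::zero \<Rightarrow> 'a mat" where
  "emb1 z = (\<lambda>i j. if i = 0 \<and> j = 0 then z else 0)"

definition diagm :: "nat \<Rightarrow> 'a::zero \<Rightarrow> 'a mat" where
  "diagm n e = (\<lambda>i j. if i = j \<and> i < n then e else 0)"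

text \<open>X^* A X for a scalar matrix X \<in> M_{n,k}(C) and A \<in> M_n(Z).\<close>
definition conj_mul :: "(complex \<Rightarrow> 'a \<Rightarrow> 'a) \<Rightarrow> nat \<Rightarrow> nat \<Rightarrow> complex mat \<Rightarrow> 'a::comm_monoid_add mat \<Rightarrow> 'a mat" where
  "conj_mul s n k X A = (\<lambda>p q. if p < k \<and> q < k
      then (\<Sum>i<n. \<Sum>j<n. s (cnj (X i p) * X j q) (A i j)) else 0)"

definition is_cone :: "(complex \<Rightarrow> 'a \<Rightarrow> 'a) \<Rightarrow> 'a::plus mat set \<Rightarrow> bool" where
  "is_cone s K \<longleftrightarrow> (\<forall>x\<in>K. \<forall>y\<in>K. x + y \<in> K) \<and>
                    (\<forall>t::real. t \<ge> 0 \<longrightarrow> (\<forall>x\<in>K. mscale s (complex_of_real t) x \<in> K))"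

definition matrix_cone :: "(complex \<Rightarrow> 'a \<Rightarrow> 'a) \<Rightarrow> (nat \<Rightarrow> 'a::comm_monoid_add mat set) \<Rightarrow> bool" where
  "matrix_cone s C \<longleftrightarrow>
     (\<forall>n\<ge>1. C n \<subseteq> {A. is_mat n A} \<and> is_cone s (C n)) \<and>
     (\<forall>n\<ge>1. \<forall>k\<ge>1. \<forall>X A. A \<in> C n \<longrightarrow> conj_mul s n k X A \<in> C k)"

text \<open>C_1 \<inter> -C_1 \<inter> iC_1 \<inter> -iC_1 = {0}  (A \<in> iC iff -iA \<in> C, A \<in> -iC iff iA \<in> C).\<close>
definition C_proper :: "(complex \<Rightarrow> 'a \<Rightarrow> 'a) \<Rightarrow> (nat \<Rightarrow> 'a::ab_group_add mat set) \<Rightarrow> bool" where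
  "C_proper s C \<longleftrightarrow> (\<forall>A. A \<in> C 1 \<and> - A \<in> C 1 \<and> mscale s (- \<i>) A \<in> C 1 \<and> mscale s \<i> A \<in> C 1
                        \<longrightarrow> A = 0)"

text \<open>Z_sa^n = i Z_ac^n \<inter> -i Z_ac^n\<close>
definition sa_part :: "(complex \<Rightarrow> 'a \<Rightarrow> 'a) \<Rightarrow> (nat \<Rightarrow> 'a mat set) \<Rightarrow> nat \<Rightarrow> 'a mat set" where
  "sa_part s C n = {A. mscale s (- \<i>) A \<in> C n \<and> mscale s \<i> A \<in> C n}"

definition accretive_mo_space :: "(complex \<Rightarrow> 'a \<Rightarrow> 'a) \<Rightarrow> (nat \<Rightarrow> 'a::ab_group_add mat set) \<Rightarrow> bool" where
  "accretive_mo_space s C \<longleftrightarrow> vector_space s \<and> matrix_cone s C \<and> C_proper s C"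

definition accretive_mo_unit :: "(complex \<Rightarrow> 'a \<Rightarrow> 'a) \<Rightarrow> (nat \<Rightarrow> 'a::ab_group_add mat set) \<Rightarrow> 'a \<Rightarrow> bool" where
  "accretive_mo_unit s C e \<longleftrightarrow> emb1 e \<in> sa_part s C 1 \<and>
     (\<forall>n\<ge>1. \<forall>A. is_mat n A \<longrightarrow>
        (\<exists>t::real. t > 0 \<and> mscale s (complex_of_real t) (diagm n e) + A \<in> C n))"

definition archimedean_unit :: "(complex \<Rightarrow> 'a \<Rightarrow> 'a) \<Rightarrow> (nat \<Rightarrow> 'a::ab_group_add mat set) \<Rightarrow> 'a \<Rightarrow> bool" where
  "archimedean_unit s C e \<longleftrightarrow>
     (\<forall>n\<ge>1. \<forall>A. is_mat n A \<longrightarrow>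
        (\<forall>t::real. t > 0 \<longrightarrow> mscale s (complex_of_real t) (diagm n e) + A \<in> C n) \<longrightarrow> A \<in> C n)"

definition accretive_amou_space :: "(complex \<Rightarrow> 'a \<Rightarrow> 'a) \<Rightarrow> (nat \<Rightarrow> 'a::ab_group_add mat set) \<Rightarrow> 'a \<Rightarrow> bool" where
  "accretive_amou_space s C e \<longleftrightarrow> accretive_mo_space s C \<and> accretive_mo_unit s C e \<and> archimedean_unit s C e"

definition self_adjoint :: "(complex \<Rightarrow> 'a \<Rightarrow> 'a) \<Rightarrow> (nat \<Rightarrow> 'a::ab_group_add mat set) \<Rightarrow> bool" where
  "self_adjoint s C \<longleftrightarrow> accretive_mo_space s C \<and>
     module.span s {v. emb1 v \<in> sa_part s C 1} = UNIV"

text \<open>The involution on a self-adjoint space: (a + i b)^* = a - i b for a, b \<in> V_sa^1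
  (well defined by C-properness).\<close>
definition adj :: "(complex \<Rightarrow> 'a \<Rightarrow> 'a) \<Rightarrow> (nat \<Rightarrow> 'a::ab_group_add mat set) \<Rightarrow> 'a \<Rightarrow> 'a" where
  "adj s C v = (SOME w. \<exists>a b. emb1 a \<in> sa_part s C 1 \<and> emb1 b \<in> sa_part s C 1 \<and>
                          v = a + s \<i> b \<and> w = a - s \<i> b)"

definition real_cp :: "(nat \<Rightarrow> 'a::zero mat set) \<Rightarrow> (nat \<Rightarrow> 'b mat set) \<Rightarrow> ('a \<Rightarrow> 'b) \<Rightarrow> bool" where
  "real_cp CZ CV f \<longleftrightarrow> (\<forall>n\<ge>1. \<forall>A. A \<in> CZ n \<longrightarrow> mmap f A \<in> CV n)"

definition real_complete_order_embedding ::
  "(complex \<Rightarrow> 'a::ab_group_add \<Rightarrow> 'a) \<Rightarrow> (nat \<Rightarrow> 'a mat set) \<Rightarrow>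
   (complex \<Rightarrow> 'b::ab_group_add \<Rightarrow> 'b) \<Rightarrow> (nat \<Rightarrow> 'b mat set) \<Rightarrow> ('a \<Rightarrow> 'b) \<Rightarrow> bool" where
  "real_complete_order_embedding sZ CZ sV CV f \<longleftrightarrow>
     Vector_Spaces.linear sZ sV f \<and> inj f \<and> real_cp CZ CV f \<and>
     (\<forall>n\<ge>1. \<forall>A. is_mat n A \<and> mmap f A \<in> CV n \<longrightarrow> A \<in> CZ n)"

definition star_closure ::
  "(complex \<Rightarrow> 'a::ab_group_add \<Rightarrow> 'a) \<Rightarrow> (nat \<Rightarrow> 'a mat set) \<Rightarrow>
   (complex \<Rightarrow> 'b::ab_group_add \<Rightarrow> 'b) \<Rightarrow> (nat \<Rightarrow> 'b mat set) \<Rightarrow> ('a \<Rightarrow> 'b) \<Rightarrow> bool" where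
  "star_closure sZ CZ sV CV \<psi> \<longleftrightarrow>
     self_adjoint sV CV \<and> real_complete_order_embedding sZ CZ sV CV \<psi> \<and>
     (\<forall>v. \<exists>z w. v = \<psi> z + adj sV CV (\<psi> w))"

end

theory Submission
  imports Defs
begin

text \<open>Every matrix A over V splits as A = \<psi>(Y) + D with D of the form M^* - M.
  Such skew matrices lie in V_ac^n \<inter> -V_ac^n, because each of their elementary pieces
  v^* E_lk - v E_kl is a positive combination of compressions x^* (\<plusminus>i a) x of
  self-adjoint elements a.  Hence D is invisible to the cones, and the order-unit and
  archimedean properties of e transfer to \<psi>(e) along the complete order embedding \<psi>.\<close>

lemma sum_apply: "sum f A x = (\<Sum>a\<in>A. f a x)"
  by (induction A rule: infinite_finite_induct) auto

lemma sum_delta_nested: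
  fixes f :: "nat \<Rightarrow> nat \<Rightarrow> 'a::comm_monoid_add"
  shows "(\<Sum>k<n. \<Sum>l<n. if k = i \<and> l = j then f k l else 0)
    = (if i < n \<and> j < n then f i j else 0)"
proof -
  have "(\<Sum>l<n. if k = i \<and> l = j then f k l else 0)
      = (if k = i then if j < n then f k j else 0 else 0)" for k
    by (cases "k = i") (simp_all add: sum.delta)
  then show ?thesis by (simp add: sum.delta)
qed

definition basis_vec :: "nat \<Rightarrow> nat \<Rightarrow> complex" where
  "basis_vec k = (\<lambda>p. if p = k then 1 else 0)"

definition unit_mat :: "nat \<Rightarrow> nat \<Rightarrow> complex mat" where
  "unit_mat k l = (\<lambda>p q. if k = p \<and> l = q then 1 else 0)"

definition rank_one :: "nat \<Rightarrow> (nat \<Rightarrow> complex) \<Rightarrow> complex mat" where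
  "rank_one n x = (\<lambda>p q. if p < n \<and> q < n then cnj (x p) * x q else 0)"

definition tensor_mat :: "(complex \<Rightarrow> 'a \<Rightarrow> 'a) \<Rightarrow> complex mat \<Rightarrow> 'a \<Rightarrow> 'a mat" where
  "tensor_mat s M z = (\<lambda>p q. s (M p q) z)"

lemma rank_one_polarization_antisym:
  assumes "k < n" "l < n"
  shows "complex_of_real (1/2) *
      (rank_one n (\<lambda>j. basis_vec k j + \<i> * basis_vec l j) p q * \<i>
     + rank_one n (\<lambda>j. basis_vec k j - \<i> * basis_vec l j) p q * - \<i>)
    = unit_mat l k p q - unit_mat k l p q"
  using assms unfolding rank_one_def basis_vec_def unit_mat_def
  by (cases "p = k"; cases "p = l"; cases "q = k"; cases "q = l")
    (auto simp: algebra_simps complex_eq_iff)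

lemma rank_one_polarization_sym:
  assumes "k < n" "l < n"
  shows "complex_of_real (1/2) *
      (rank_one n (\<lambda>j. basis_vec k j - basis_vec l j) p q * \<i>
     + rank_one n (\<lambda>j. basis_vec k j + basis_vec l j) p q * - \<i>)
    = - \<i> * (unit_mat l k p q + unit_mat k l p q)"
  using assms unfolding rank_one_def basis_vec_def unit_mat_def
  by (cases "p = k"; cases "p = l"; cases "q = k"; cases "q = l")
    (auto simp: algebra_simps complex_eq_iff)

lemma conj_mul_emb1:
  assumes "vector_space s"
  shows "conj_mul s 1 n (\<lambda>_ p. x p) (emb1 z) = tensor_mat s (rank_one n x) z"
proof -
  interpret vector_space s by (rule assms)
  show ?thesis unfolding conj_mul_def emb1_def tensor_mat_def rank_one_def by (rule ext)+ simp
qed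

lemma mscale_emb1:
  assumes "vector_space s" shows "mscale s c (emb1 v) = emb1 (s c v)"
proof -
  interpret vector_space s by (rule assms)
  show ?thesis unfolding mscale_def emb1_def by (rule ext)+ simp
qed

lemma emb1_add: "emb1 (x + y) = emb1 x + emb1 (y :: 'a::monoid_add)"
  unfolding emb1_def by (rule ext)+ simp

lemma emb1_eq_0_iff: "emb1 x = 0 \<longleftrightarrow> x = 0"
  by (auto simp: emb1_def fun_eq_iff)

locale self_adjoint_space =
  fixes s :: "complex \<Rightarrow> 'a::ab_group_add \<Rightarrow> 'a" and C :: "nat \<Rightarrow> 'a mat set"
  assumes self_adjoint: "self_adjoint s C" and nonempty: "C 1 \<noteq> {}"
  \<comment> \<open>nonemptiness only excludes V = {0} with all cones empty\<close>
begin

sublocale vector_space s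
  using self_adjoint unfolding self_adjoint_def accretive_mo_space_def by blast

definition sa_elems :: "'a set" where
  "sa_elems = {v. emb1 v \<in> sa_part s C 1}"

lemma span_sa_elems: "span sa_elems = UNIV"
  using self_adjoint unfolding self_adjoint_def sa_elems_def by blast

lemma cone_add: "n \<ge> 1 \<Longrightarrow> A \<in> C n \<Longrightarrow> B \<in> C n \<Longrightarrow> A + B \<in> C n"
  using self_adjoint
  unfolding self_adjoint_def accretive_mo_space_def matrix_cone_def is_cone_def by blast

lemma cone_scale: "n \<ge> 1 \<Longrightarrow> t \<ge> 0 \<Longrightarrow> A \<in> C n \<Longrightarrow> mscale s (complex_of_real t) A \<in> C n"
  using self_adjoint
  unfolding self_adjoint_def accretive_mo_space_def matrix_cone_def is_cone_def by blast

lemma cone_conj_mul: "n \<ge> 1 \<Longrightarrow> k \<ge> 1 \<Longrightarrow> A \<in> C n \<Longrightarrow> conj_mul s n k X A \<in> C k"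
  using self_adjoint unfolding self_adjoint_def accretive_mo_space_def matrix_cone_def by blast

lemma zero_mem_cone: assumes "k \<ge> 1" shows "0 \<in> C k"
proof -
  obtain A where "A \<in> C 1" using nonempty by blast
  then have "conj_mul s 1 k (\<lambda>_ _. 0) A \<in> C k" using assms by (intro cone_conj_mul) auto
  moreover have "conj_mul s 1 k (\<lambda>_ _. 0) A = 0"
    unfolding conj_mul_def by (rule ext)+ simp
  ultimately show ?thesis by simp
qed

lemma sum_mem_cone: "n \<ge> 1 \<Longrightarrow> (\<And>i. i \<in> F \<Longrightarrow> f i \<in> C n) \<Longrightarrow> sum f F \<in> C n"
  by (induction F rule: infinite_finite_induct) (auto simp: zero_mem_cone cone_add)

lemma sa_elems_iff: "v \<in> sa_elems \<longleftrightarrow> emb1 (s (-\<i>) v) \<in> C 1 \<and> emb1 (s \<i> v) \<in> C 1"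
  by (simp add: sa_elems_def sa_part_def mscale_emb1[OF vector_space_axioms])

lemma sa_elems_zero: "0 \<in> sa_elems"
  using zero_mem_cone[of 1] by (simp add: sa_elems_iff emb1_def zero_fun_def)

lemma sa_elems_add: "a \<in> sa_elems \<Longrightarrow> b \<in> sa_elems \<Longrightarrow> a + b \<in> sa_elems"
  unfolding sa_elems_iff scale_right_distrib emb1_add by (blast intro: cone_add[OF order_refl])

lemma emb1_scale_mem: "t \<ge> 0 \<Longrightarrow> emb1 v \<in> C 1 \<Longrightarrow> emb1 (s (complex_of_real t) v) \<in> C 1"
  using cone_scale[of 1 t "emb1 v"] by (simp add: mscale_emb1[OF vector_space_axioms])

lemma sa_elems_scale_real:
  assumes "a \<in> sa_elems" shows "s (complex_of_real t) a \<in> sa_elems"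
proof (cases "t \<ge> 0")
  case True
  have "s c (s (complex_of_real t) a) = s (complex_of_real t) (s c a)" for c
    by (simp add: mult.commute)
  then show ?thesis
    using assms emb1_scale_mem[OF True] unfolding sa_elems_iff by metis
next
  case False
  then have "- t \<ge> 0" by simp
  moreover have "s (- \<i>) (s (complex_of_real t) a) = s (complex_of_real (- t)) (s \<i> a)"
    "s \<i> (s (complex_of_real t) a) = s (complex_of_real (- t)) (s (- \<i>) a)"
    by (simp_all add: mult.commute)
  ultimately show ?thesis
    using assms emb1_scale_mem unfolding sa_elems_iff by metis
qed

lemma sa_elems_uminus: "a \<in> sa_elems \<Longrightarrow> - a \<in> sa_elems"
  using sa_elems_scale_real[of a "- 1"] by simp

lemma sa_elems_diff: "a \<in> sa_elems \<Longrightarrow> b \<in> sa_elems \<Longrightarrow> a - b \<in> sa_elems"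
  unfolding diff_conv_add_uminus by (intro sa_elems_add sa_elems_uminus)

lemma sa_decomposition: obtains a b where "a \<in> sa_elems" "b \<in> sa_elems" "v = a + s \<i> b"
proof -
  have "v \<in> span sa_elems" using span_sa_elems by simp
  then have "\<exists>a b. a \<in> sa_elems \<and> b \<in> sa_elems \<and> v = a + s \<i> b"
  proof (induction rule: span_induct_alt)
    case base
    show ?case using sa_elems_zero by force
  next
    case (step c x y)
    then obtain a b where ab: "a \<in> sa_elems" "b \<in> sa_elems" "y = a + s \<i> b" by blast
    have "s c x = s (complex_of_real (Re c)) x + s \<i> (s (complex_of_real (Im c)) x)"
      by (metis complex_eq scale_left_distrib scale_scale)
    then have "s c x + y
        = (s (complex_of_real (Re c)) x + a) + s \<i> (s (complex_of_real (Im c)) x + b)"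
      by (simp add: ab(3) scale_right_distrib algebra_simps)
    moreover have "s (complex_of_real (Re c)) x + a \<in> sa_elems"
      "s (complex_of_real (Im c)) x + b \<in> sa_elems"
      using ab step(1) by (auto intro: sa_elems_add sa_elems_scale_real)
    ultimately show ?case by blast
  qed
  then show ?thesis using that by blast
qed

lemma cone_proper:
  "A \<in> C 1 \<Longrightarrow> - A \<in> C 1 \<Longrightarrow> mscale s (- \<i>) A \<in> C 1 \<Longrightarrow> mscale s \<i> A \<in> C 1 \<Longrightarrow> A = 0"
  using self_adjoint unfolding self_adjoint_def accretive_mo_space_def C_proper_def by blast

lemma sa_decomposition_zero:
  assumes a: "a \<in> sa_elems" and b: "b \<in> sa_elems" and ab: "a + s \<i> b = 0"
  shows "a = 0" "b = 0"
proof -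
  have a_eq: "a = s (- \<i>) b" using ab by (simp add: eq_neg_iff_add_eq_0)
  have "emb1 a = 0"
  proof (rule cone_proper)
    have "- emb1 a = emb1 (s \<i> b)" by (simp add: a_eq emb1_def fun_eq_iff)
    then show "emb1 a \<in> C 1" "- emb1 a \<in> C 1"
      using b unfolding sa_elems_iff a_eq by simp_all
    show "mscale s (- \<i>) (emb1 a) \<in> C 1" "mscale s \<i> (emb1 a) \<in> C 1"
      using a unfolding sa_elems_iff mscale_emb1[OF vector_space_axioms] by simp_all
  qed
  then show "a = 0" by (simp add: emb1_eq_0_iff)
  then show "b = 0" using a_eq by simp
qed

lemma sa_decomposition_unique:
  assumes "a \<in> sa_elems" "b \<in> sa_elems" "a' \<in> sa_elems" "b' \<in> sa_elems"
    and "a + s \<i> b = a' + s \<i> b'"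
  shows "a = a'" "b = b'"
proof -
  have "(a - a') + s \<i> (b - b') = 0"
    using assms(5) by (simp add: scale_right_diff_distrib algebra_simps)
  then show "a = a'" "b = b'"
    using sa_decomposition_zero sa_elems_diff assms(1-4) by (metis eq_iff_diff_eq_0)+
qed

lemma adj_eq:
  assumes "a \<in> sa_elems" "b \<in> sa_elems" shows "adj s C (a + s \<i> b) = a - s \<i> b"
proof -
  have "\<exists>w a' b'. emb1 a' \<in> sa_part s C 1 \<and> emb1 b' \<in> sa_part s C 1
      \<and> a + s \<i> b = a' + s \<i> b' \<and> w = a' - s \<i> b'"
    using assms unfolding sa_elems_def by blast
  then have "\<exists>a' b'. emb1 a' \<in> sa_part s C 1 \<and> emb1 b' \<in> sa_part s C 1
      \<and> a + s \<i> b = a' + s \<i> b' \<and> adj s C (a + s \<i> b) = a' - s \<i> b'"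
    unfolding adj_def by (rule someI_ex)
  then show ?thesis using sa_decomposition_unique[OF assms] unfolding sa_elems_def by blast
qed

lemma adj_uminus: "adj s C (- v) = - adj s C v"
proof -
  obtain a b where ab: "a \<in> sa_elems" "b \<in> sa_elems" "v = a + s \<i> b"
    by (rule sa_decomposition)
  have "adj s C (- a + s \<i> (- b)) = - a - s \<i> (- b)"
    using ab sa_elems_uminus by (intro adj_eq)
  moreover have "- v = - a + s \<i> (- b)" using ab(3) by simp
  ultimately show ?thesis using adj_eq[OF ab(1,2)] ab(3) by simp
qed

lemma rank_one_mem: "n \<ge> 1 \<Longrightarrow> emb1 z \<in> C 1 \<Longrightarrow> tensor_mat s (rank_one n x) z \<in> C n"
  using cone_conj_mul[of 1 n "emb1 z" "\<lambda>_ p. x p"] conj_mul_emb1[OF vector_space_axioms] by simp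

lemma tensor_mat_polarization:
  "mscale s (complex_of_real (1/2)) (tensor_mat s M (s \<i> z) + tensor_mat s N (s (- \<i>) z))
    = tensor_mat s (\<lambda>p q. complex_of_real (1/2) * (M p q * \<i> + N p q * - \<i>)) z"
  unfolding mscale_def tensor_mat_def
  by (rule ext)+ (simp only: plus_fun_apply scale_scale distrib_left scale_left_distrib scale_right_distrib)

lemma sa_antisym_mem:
  assumes a: "a \<in> sa_elems" and "n \<ge> 1" "k < n" "l < n"
  shows "tensor_mat s (\<lambda>p q. unit_mat l k p q - unit_mat k l p q) a \<in> C n"
proof -
  have "mscale s (complex_of_real (1/2))
      (tensor_mat s (rank_one n (\<lambda>j. basis_vec k j + \<i> * basis_vec l j)) (s \<i> a)
     + tensor_mat s (rank_one n (\<lambda>j. basis_vec k j - \<i> * basis_vec l j)) (s (- \<i>) a)) \<in> C n"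
    using a assms(2) unfolding sa_elems_iff by (intro cone_scale cone_add rank_one_mem) auto
  then show ?thesis
    unfolding tensor_mat_polarization rank_one_polarization_antisym[OF assms(3,4)] .
qed

lemma sa_sym_mem:
  assumes b: "b \<in> sa_elems" and "n \<ge> 1" "k < n" "l < n"
  shows "tensor_mat s (\<lambda>p q. - \<i> * (unit_mat l k p q + unit_mat k l p q)) b \<in> C n"
proof -
  have "mscale s (complex_of_real (1/2))
      (tensor_mat s (rank_one n (\<lambda>j. basis_vec k j - basis_vec l j)) (s \<i> b)
     + tensor_mat s (rank_one n (\<lambda>j. basis_vec k j + basis_vec l j)) (s (- \<i>) b)) \<in> C n"
    using b assms(2) unfolding sa_elems_iff by (intro cone_scale cone_add rank_one_mem) auto
  then show ?thesis
    unfolding tensor_mat_polarization rank_one_polarization_sym[OF assms(3,4)] .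
qed

lemma skew_unit_mem:
  assumes "n \<ge> 1" "k < n" "l < n"
  shows "tensor_mat s (unit_mat l k) (adj s C v) - tensor_mat s (unit_mat k l) v \<in> C n"
proof -
  obtain a b where ab: "a \<in> sa_elems" "b \<in> sa_elems" "v = a + s \<i> b"
    by (rule sa_decomposition)
  have "tensor_mat s (unit_mat l k) (adj s C v) - tensor_mat s (unit_mat k l) v
    = tensor_mat s (\<lambda>p q. unit_mat l k p q - unit_mat k l p q) a
    + tensor_mat s (\<lambda>p q. - \<i> * (unit_mat l k p q + unit_mat k l p q)) b"
    unfolding ab(3) adj_eq[OF ab(1,2)] tensor_mat_def
    by (rule ext)+ (simp add: scale_left_distrib scale_left_diff_distrib scale_right_distrib
        scale_right_diff_distrib algebra_simps)
  also have "\<dots> \<in> C n"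
    using assms ab by (intro cone_add sa_antisym_mem sa_sym_mem)
  finally show ?thesis .
qed

lemma skew_mat_mem:
  assumes "n \<ge> 1"
  shows "(\<lambda>p q. if p < n \<and> q < n then adj s C (Q q p) - Q p q else 0) \<in> C n"
proof -
  have "(\<Sum>k<n. \<Sum>l<n. tensor_mat s (unit_mat l k) (adj s C (Q k l))) p q
      = (\<Sum>l<n. \<Sum>k<n. if l = p \<and> k = q then adj s C (Q k l) else 0)"
      "(\<Sum>k<n. \<Sum>l<n. tensor_mat s (unit_mat k l) (Q k l)) p q
      = (\<Sum>k<n. \<Sum>l<n. if k = p \<and> l = q then Q k l else 0)" for p q
    by (subst sum.swap, simp_all add: sum_apply tensor_mat_def unit_mat_def
        if_distrib[of "\<lambda>c. s c _"] cong: if_cong)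
  then have "(\<lambda>p q. if p < n \<and> q < n then adj s C (Q q p) - Q p q else 0)
    = (\<Sum>k<n. \<Sum>l<n.
        tensor_mat s (unit_mat l k) (adj s C (Q k l)) - tensor_mat s (unit_mat k l) (Q k l))"
    by (simp add: fun_eq_iff sum_subtractf sum_apply sum_delta_nested)
  also have "\<dots> \<in> C n"
    using assms by (intro sum_mem_cone skew_unit_mem) auto
  finally show ?thesis .
qed

end

lemma accretive_mo_unit_cone_nonempty: "accretive_mo_unit s C e \<Longrightarrow> C 1 \<noteq> {}"
  unfolding accretive_mo_unit_def sa_part_def by blast

context
  fixes sZ :: "complex \<Rightarrow> 'z::ab_group_add \<Rightarrow> 'z" and sV :: "complex \<Rightarrow> 'v::ab_group_add \<Rightarrow> 'v"
    and f :: "'z \<Rightarrow> 'v"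
  assumes linear: "Vector_Spaces.linear sZ sV f"
begin

interpretation Vector_Spaces.linear sZ sV f by (rule linear)

lemma mmap_add: "mmap f (A + B) = mmap f A + mmap f B"
  unfolding mmap_def by (simp add: fun_eq_iff add)

lemma mmap_mscale: "mmap f (mscale sZ c A) = mscale sV c (mmap f A)"
  unfolding mmap_def mscale_def by (simp add: scale)

lemma mmap_diagm: "mmap f (diagm n z) = diagm n (f z)"
  unfolding mmap_def diagm_def by (simp add: fun_eq_iff)

lemma mmap_emb1: "mmap f (emb1 z) = emb1 (f z)"
  unfolding mmap_def emb1_def by (simp add: fun_eq_iff)

lemma mmap_unit_shift:
  "mmap f (mscale sZ (complex_of_real t) (diagm n e) + Y)
    = mscale sV (complex_of_real t) (diagm n (f e)) + mmap f Y"
  by (simp add: mmap_add mmap_mscale mmap_diagm)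

lemma is_mat_unit_shift: "is_mat n Y \<Longrightarrow> is_mat n (mscale sZ c (diagm n e) + Y)"
  unfolding is_mat_def mscale_def diagm_def by auto

end

text \<open>By the *-closure property A_pq = \<psi>(z_pq) + \<psi>(w_pq)^*; with M = [\<psi>(w_qp)]
  this reads A = \<psi>(Z + W^T) + (M^* - M).\<close>

lemma star_closure_decomposition:
  assumes closure: "star_closure sZ CZ sV CV \<psi>" and "CV 1 \<noteq> {}" and n: "n \<ge> 1"
    and A: "is_mat n A"
  obtains Y D where "is_mat n Y" "D \<in> CV n" "- D \<in> CV n" "A = mmap \<psi> Y + D"
proof -
  interpret V: self_adjoint_space sV CV
    using assms unfolding star_closure_def by unfold_locales auto
  have lin: "Vector_Spaces.linear sZ sV \<psi>"
    using closure unfolding star_closure_def real_complete_order_embedding_def by blast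
  interpret Vector_Spaces.linear sZ sV \<psi> by (rule lin)
  obtain z w where zw: "\<And>v. v = \<psi> (z v) + adj sV CV (\<psi> (w v))"
    using closure unfolding star_closure_def by metis
  define Y where "Y = (\<lambda>p q. if p < n \<and> q < n then z (A p q) + w (A q p) else 0)"
  define Q where "Q = (\<lambda>p q. \<psi> (w (A q p)))"
  define D where "D = (\<lambda>p q. if p < n \<and> q < n then adj sV CV (Q q p) - Q p q else 0)"
  have "D \<in> CV n" unfolding D_def using n by (rule V.skew_mat_mem)
  moreover have "- D \<in> CV n"
  proof -
    have "- D = (\<lambda>p q. if p < n \<and> q < n then adj sV CV (- Q q p) - (- Q p q) else 0)"
      unfolding D_def by (simp add: fun_eq_iff V.adj_uminus)
    then show ?thesis using V.skew_mat_mem[OF n] by simp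
  qed
  moreover have "is_mat n Y" unfolding is_mat_def Y_def by auto
  moreover have "A = mmap \<psi> Y + D"
    using A zw unfolding is_mat_def Y_def D_def Q_def mmap_def
    by (auto simp: fun_eq_iff add)
  ultimately show ?thesis using that by blast
qed

lemma star_closure_accretive_mo_unit:
  assumes unit: "accretive_mo_unit sZ CZ e" and closure: "star_closure sZ CZ sV CV \<psi>"
  shows "accretive_mo_unit sV CV (\<psi> e)"
proof -
  have lin: "Vector_Spaces.linear sZ sV \<psi>" and cp: "real_cp CZ CV \<psi>"
    using closure unfolding star_closure_def real_complete_order_embedding_def by blast+
  have "mmap \<psi> (mscale sZ c (emb1 e)) \<in> CV 1" if "mscale sZ c (emb1 e) \<in> CZ 1" for c
    using cp that unfolding real_cp_def by blast
  then have sa: "emb1 (\<psi> e) \<in> sa_part sV CV 1"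
    using unit unfolding accretive_mo_unit_def sa_part_def
    by (simp add: mmap_mscale[OF lin] mmap_emb1[OF lin])
  then have nonempty: "CV 1 \<noteq> {}" unfolding sa_part_def by blast
  interpret V: self_adjoint_space sV CV
    using closure nonempty unfolding star_closure_def by unfold_locales auto
  show ?thesis unfolding accretive_mo_unit_def
  proof (intro conjI sa allI impI)
    fix n and A :: "'b mat" assume n: "n \<ge> 1" and A: "is_mat n A"
    obtain Y D where Y: "is_mat n Y" and D: "D \<in> CV n" and A_eq: "A = mmap \<psi> Y + D"
      using star_closure_decomposition[OF closure nonempty n A] by metis
    obtain t where t: "t > 0" "mscale sZ (complex_of_real t) (diagm n e) + Y \<in> CZ n"
      using unit Y n unfolding accretive_mo_unit_def by blast
    have "mmap \<psi> (mscale sZ (complex_of_real t) (diagm n e) + Y) + D \<in> CV n"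
      using cp t(2) n D unfolding real_cp_def by (blast intro: V.cone_add)
    then show "\<exists>t>0. mscale sV (complex_of_real t) (diagm n (\<psi> e)) + A \<in> CV n"
      using t(1) unfolding A_eq mmap_unit_shift[OF lin] add.assoc by blast
  qed
qed

lemma star_closure_archimedean_unit:
  assumes arch: "archimedean_unit sZ CZ e" and closure: "star_closure sZ CZ sV CV \<psi>"
    and nonempty: "CV 1 \<noteq> {}"
  shows "archimedean_unit sV CV (\<psi> e)"
  unfolding archimedean_unit_def
proof (intro allI impI)
  fix n and A :: "'b mat"
  assume n: "n \<ge> 1" and A: "is_mat n A"
    and shifts: "\<forall>t>0. mscale sV (complex_of_real t) (diagm n (\<psi> e)) + A \<in> CV n"
  have lin: "Vector_Spaces.linear sZ sV \<psi>" and cp: "real_cp CZ CV \<psi>"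
    and reflect: "\<And>A. is_mat n A \<Longrightarrow> mmap \<psi> A \<in> CV n \<Longrightarrow> A \<in> CZ n"
    using closure n unfolding star_closure_def real_complete_order_embedding_def by blast+
  interpret V: self_adjoint_space sV CV
    using closure nonempty unfolding star_closure_def by unfold_locales auto
  obtain Y D where Y: "is_mat n Y" and D: "D \<in> CV n" "- D \<in> CV n" and A_eq: "A = mmap \<psi> Y + D"
    using star_closure_decomposition[OF closure nonempty n A] by metis
  have "mscale sZ (complex_of_real t) (diagm n e) + Y \<in> CZ n" if "t > 0" for t
  proof (rule reflect)
    show "is_mat n (mscale sZ (complex_of_real t) (diagm n e) + Y)"
      using Y by (rule is_mat_unit_shift[OF lin])
    have "(mscale sV (complex_of_real t) (diagm n (\<psi> e)) + A) + - D \<in> CV n"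
      using shifts that n D by (blast intro: V.cone_add)
    then show "mmap \<psi> (mscale sZ (complex_of_real t) (diagm n e) + Y) \<in> CV n"
      unfolding mmap_unit_shift[OF lin] A_eq by (simp add: add.assoc)
  qed
  then have "Y \<in> CZ n" using arch Y n unfolding archimedean_unit_def by blast
  then show "A \<in> CV n"
    using cp n D unfolding A_eq real_cp_def by (blast intro: V.cone_add)
qed

theorem proposition3p3:
  fixes sZ :: "complex \<Rightarrow> 'z::ab_group_add \<Rightarrow> 'z" and CZ :: "nat \<Rightarrow> 'z mat set"
    and sV :: "complex \<Rightarrow> 'v::ab_group_add \<Rightarrow> 'v" and CV :: "nat \<Rightarrow> 'v mat set"
    and \<psi> :: "'z \<Rightarrow> 'v" and e :: 'z
  assumes "accretive_amou_space sZ CZ e"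
    and "star_closure sZ CZ sV CV \<psi>"
  shows "accretive_mo_unit sV CV (\<psi> e) \<and> archimedean_unit sV CV (\<psi> e)"
proof
  show unit: "accretive_mo_unit sV CV (\<psi> e)"
    using assms star_closure_accretive_mo_unit unfolding accretive_amou_space_def by blast
  show "archimedean_unit sV CV (\<psi> e)"
    using assms star_closure_archimedean_unit accretive_mo_unit_cone_nonempty[OF unit]
    unfolding accretive_amou_space_def by blast
qed

end
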